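(* Let $G=G_1\times G_2$ be a product of commutative groups, $1<p<\infty$, and $f$ a nonnegative function in $\ell^1(G)$. For $x\in G_1$ define $f_x(y)=f(x,y)$, a function on $G_2$, and let $g(x)=\gamma_p(f_x)$ (computed in $G_2$), a function on $G_1$. Then $\gamma_p(f)\ge\gamma_p(g)$, where $\gamma_p(g)$ is computed in $G_1$.
   Context: For nonnegative functions $f,g$ on a commutative group $K$, $(f\star g)(x)=\max_t f(t)g(x-t)$. For nonnegative $f\in\ell^1(K)$ and $1/p+1/q=1$, $\gamma_p(f)=\inf_{g,h}\frac{\|f\star g\star h\|_1}{\|g\|_p\|h\|_q}$, infimum over nonzero nonnegative $g,h\in\ell^1(K)$. *)

theory Defs
  imports "HOL-Analysis.Analysis" "HOL-Library.Product_Plus"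
begin

text \<open>For nonnegative l1 functions the supremum is attained
  (or everything is 0), so the supremum is the maximum.\<close>
definition maxconv :: "('a::ab_group_add \<Rightarrow> real) \<Rightarrow> ('a \<Rightarrow> real) \<Rightarrow> 'a \<Rightarrow> real" where
  "maxconv f g x = (SUP t. f t * g (x - t))"

definition nonneg_l1 :: "('a \<Rightarrow> real) \<Rightarrow> bool" where
  "nonneg_l1 f \<longleftrightarrow> (\<forall>x. 0 \<le> f x) \<and> f summable_on UNIV"

definition lnorm1 :: "('a \<Rightarrow> real) \<Rightarrow> real" where
  "lnorm1 f = (\<Sum>\<^sub>\<infinity>x. \<bar>f x\<bar>)"

definition lpnorm :: "real \<Rightarrow> ('a \<Rightarrow> real) \<Rightarrow> real" where
  "lpnorm p f = (\<Sum>\<^sub>\<infinity>x. \<bar>f x\<bar> powr p) powr (1 / p)"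

definition conj_exp :: "real \<Rightarrow> real" where
  "conj_exp p = p / (p - 1)"

definition gamma_p :: "real \<Rightarrow> ('a::ab_group_add \<Rightarrow> real) \<Rightarrow> real" where
  "gamma_p p f = Inf {lnorm1 (maxconv (maxconv f g) h) / (lpnorm p g * lpnorm (conj_exp p) h) | g h.
      nonneg_l1 g \<and> nonneg_l1 h \<and> g \<noteq> (\<lambda>_. 0) \<and> h \<noteq> (\<lambda>_. 0)}"

end

theory Submission
  imports Defs
begin

(* Let g, h be admissible on G1 x G2 and put G(x) = |g(x,-)|_p, H(x) = |h(x,-)|_q, so that
   |G|_p = |g|_p and |H|_q = |h|_q.  For all s, t, u the max-convolution of the sections
   f(s,-), g(t,-), h(u,-) is bounded pointwise by the section of (f * g) * h at s + t + u.
   Applying the definition of gamma_p to f(s,-) therefore gives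
   gamma(s) G(t) H(u) <= A(s + t + u), where gamma(s) = gamma_p(f(s,-)) and A(x) is the l1 norm
   of the x-section of (f * g) * h.  Hence (gamma * G) * H <= A pointwise, and |A|_1 is the
   l1 norm of (f * g) * h, so gamma_p(gamma) <= |(f * g) * h|_1 / (|g|_p |h|_q). *)

lemma nonneg_l1_le_infsum:
  assumes "nonneg_l1 a"
  shows "a x \<le> infsum a UNIV"
  using finite_sum_le_infsum[of a UNIV "{x}"] assms by (simp add: nonneg_l1_def)

lemma nonneg_l1_abs_summable_on:
  assumes "nonneg_l1 g"
  shows "(\<lambda>z. \<bar>g z\<bar>) summable_on UNIV"
  using assms by (simp add: nonneg_l1_def)

lemma nonneg_l1_section:
  fixes g :: "'a \<times> 'b \<Rightarrow> real"
  assumes "nonneg_l1 g"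
  shows "nonneg_l1 (\<lambda>y. g (x, y))"
  using assms summable_on_SigmaD1[of "\<lambda>x y. g (x, y)" UNIV "\<lambda>_. UNIV" x]
  by (simp add: nonneg_l1_def)

lemma has_sum_shift_iff:
  fixes t :: "'a::ab_group_add"
  shows "((\<lambda>z. b (z - t)) has_sum s) UNIV \<longleftrightarrow> (b has_sum s) UNIV"
  by (rule has_sum_reindex_bij_witness[of UNIV "\<lambda>z. z + t" "\<lambda>z. z - t"]) auto

lemma convolution_kernel_summable_on:
  fixes a b :: "'a::ab_group_add \<Rightarrow> real"
  assumes a: "nonneg_l1 a" and b: "nonneg_l1 b"
  shows "(\<lambda>(z, t). a t * b (z - t)) summable_on UNIV \<times> UNIV"
proof -
  have "((\<lambda>z. b (z - t)) has_sum infsum b UNIV) UNIV" for t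
    using b by (simp add: has_sum_shift_iff nonneg_l1_def)
  then have rows: "((\<lambda>z. a t * b (z - t)) has_sum a t * infsum b UNIV) UNIV" for t
    by (rule has_sum_cmult_right)
  have "(\<lambda>(t, z). a t * b (z - t)) summable_on UNIV \<times> UNIV"
    by (rule summable_on_SigmaI[where g = "\<lambda>t. a t * infsum b UNIV"])
      (use rows a b in \<open>auto simp: nonneg_l1_def summable_on_cmult_left\<close>)
  then show ?thesis
    by (subst summable_on_swap) (simp add: case_prod_unfold)
qed

lemma lnorm1_nonneg: "0 \<le> lnorm1 g"
  unfolding lnorm1_def by (rule infsum_nonneg) simp

lemma lnorm1_mono:
  assumes "A summable_on UNIV" and "\<And>x. \<bar>K x\<bar> \<le> A x"
  shows "lnorm1 K \<le> lnorm1 A"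
proof -
  have "\<bar>A x\<bar> = A x" for x
    using assms(2)[of x] by simp
  then show ?thesis
    unfolding lnorm1_def using assms
    by (simp add: infsum_mono summable_on_comparison_test)
qed

lemma lnorm1_sections:
  fixes g :: "'a \<times> 'b \<Rightarrow> real"
  assumes "(\<lambda>z. \<bar>g z\<bar>) summable_on UNIV"
  shows "(\<lambda>x. lnorm1 (\<lambda>y. g (x, y))) summable_on UNIV"
    and "lnorm1 (\<lambda>x. lnorm1 (\<lambda>y. g (x, y))) = lnorm1 g"
proof -
  show sum: "(\<lambda>x. lnorm1 (\<lambda>y. g (x, y))) summable_on UNIV"
    unfolding lnorm1_def
    using summable_on_Sigma_banach[of "\<lambda>x y. \<bar>g (x, y)\<bar>" UNIV "\<lambda>_. UNIV"] assms
    by (simp add: split_def)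
  have "lnorm1 (\<lambda>x. lnorm1 (\<lambda>y. g (x, y))) = (\<Sum>\<^sub>\<infinity>x. \<Sum>\<^sub>\<infinity>y. \<bar>g (x, y)\<bar>)"
    by (simp add: lnorm1_def infsum_nonneg)
  also have "\<dots> = lnorm1 g"
    unfolding lnorm1_def
    using infsum_Sigma_banach[of "\<lambda>z. \<bar>g z\<bar>" UNIV "\<lambda>_. UNIV"] assms by simp
  finally show "lnorm1 (\<lambda>x. lnorm1 (\<lambda>y. g (x, y))) = lnorm1 g" .
qed

lemma lpnorm_nonneg: "0 \<le> lpnorm r g"
  by (simp add: lpnorm_def)

lemma lpnorm_zero [simp]: "lpnorm r (\<lambda>_. 0) = 0"
  by (simp add: lpnorm_def)

lemma lpnorm_pos:
  assumes "(\<lambda>z. \<bar>g z\<bar> powr r) summable_on UNIV" and "g \<noteq> (\<lambda>_. 0)"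
  shows "0 < lpnorm r g"
proof -
  obtain z where "g z \<noteq> 0"
    using assms(2) by auto
  then have "0 < \<bar>g z\<bar> powr r"
    by simp
  also have "\<dots> \<le> (\<Sum>\<^sub>\<infinity>z. \<bar>g z\<bar> powr r)"
    using finite_sum_le_infsum[OF assms(1), of "{z}"] by simp
  finally show ?thesis
    by (simp add: lpnorm_def)
qed

lemma powr_le_mult_powr_minus_one:
  fixes v M r :: real
  assumes "0 \<le> v" and "v \<le> M" and "1 \<le> r"
  shows "v powr r \<le> M powr (r - 1) * v"
proof -
  have "v powr r = v powr (r - 1) * v"
    using powr_mult_base[OF assms(1), of "r - 1"] by (simp add: mult.commute)
  also have "\<dots> \<le> M powr (r - 1) * v"
    using assms by (intro mult_right_mono powr_mono2) auto
  finally show ?thesis .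
qed

lemma nonneg_l1_powr_summable_on:
  assumes g: "nonneg_l1 g" and r: "1 \<le> r"
  shows "(\<lambda>z. \<bar>g z\<bar> powr r) summable_on UNIV"
proof (rule summable_on_comparison_test)
  show "(\<lambda>z. infsum g UNIV powr (r - 1) * g z) summable_on UNIV"
    using g by (simp add: nonneg_l1_def summable_on_cmult_right)
  show "\<bar>g z\<bar> powr r \<le> infsum g UNIV powr (r - 1) * g z" for z
    using g r by (simp add: powr_le_mult_powr_minus_one nonneg_l1_le_infsum nonneg_l1_def)
qed simp

lemma lpnorm_le_lnorm1:
  assumes g: "nonneg_l1 g" and r: "1 \<le> r"
  shows "lpnorm r g \<le> lnorm1 g"
proof -
  define S where "S = infsum g UNIV"
  have S: "0 \<le> S" "lnorm1 g = S"
    using g by (auto simp: S_def lnorm1_def nonneg_l1_def infsum_nonneg)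
  have "(\<Sum>\<^sub>\<infinity>z. \<bar>g z\<bar> powr r) \<le> (\<Sum>\<^sub>\<infinity>z. S powr (r - 1) * g z)"
    using g r nonneg_l1_powr_summable_on[OF g r]
    by (intro infsum_mono)
      (auto simp: S_def nonneg_l1_def summable_on_cmult_right powr_le_mult_powr_minus_one
        nonneg_l1_le_infsum)
  also have "\<dots> = S powr (r - 1) * S"
    using g by (simp add: S_def nonneg_l1_def infsum_cmult_right)
  also have "\<dots> = S powr r"
    using powr_mult_base[OF S(1), of "r - 1"] by (simp add: mult.commute)
  finally have "lpnorm r g \<le> (S powr r) powr (1 / r)"
    unfolding lpnorm_def using r by (intro powr_mono2) (auto intro: infsum_nonneg)
  also have "\<dots> = lnorm1 g"
    using S r by (simp add: powr_powr powr_one)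
  finally show ?thesis .
qed

lemma lpnorm_sections:
  fixes g :: "'a \<times> 'b \<Rightarrow> real"
  assumes "(\<lambda>z. \<bar>g z\<bar> powr r) summable_on UNIV" and "r \<noteq> 0"
  shows "lpnorm r (\<lambda>x. lpnorm r (\<lambda>y. g (x, y))) = lpnorm r g"
proof -
  have "\<bar>lpnorm r (\<lambda>y. g (x, y))\<bar> powr r = (\<Sum>\<^sub>\<infinity>y. \<bar>g (x, y)\<bar> powr r)" for x
    using assms(2) by (simp add: lpnorm_def powr_powr powr_one infsum_nonneg)
  moreover have "(\<Sum>\<^sub>\<infinity>x. \<Sum>\<^sub>\<infinity>y. \<bar>g (x, y)\<bar> powr r) = (\<Sum>\<^sub>\<infinity>z. \<bar>g z\<bar> powr r)"
    using infsum_Sigma_banach[of "\<lambda>z. \<bar>g z\<bar> powr r" UNIV "\<lambda>_. UNIV"] assms(1) by simp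
  ultimately show ?thesis
    by (simp add: lpnorm_def)
qed

lemma nonneg_l1_lpnorm_sections:
  fixes g :: "'a \<times> 'b \<Rightarrow> real"
  assumes g: "nonneg_l1 g" and r: "1 \<le> r"
  shows "nonneg_l1 (\<lambda>x. lpnorm r (\<lambda>y. g (x, y)))"
proof -
  have "(\<lambda>x. lpnorm r (\<lambda>y. g (x, y))) summable_on UNIV"
  proof (rule summable_on_comparison_test[OF lnorm1_sections(1)[of g]])
    show "(\<lambda>z. \<bar>g z\<bar>) summable_on UNIV"
      by (rule nonneg_l1_abs_summable_on[OF g])
    show "lpnorm r (\<lambda>y. g (x, y)) \<le> lnorm1 (\<lambda>y. g (x, y))" for x
      by (rule lpnorm_le_lnorm1[OF nonneg_l1_section[OF g] r])
  qed (simp add: lpnorm_nonneg)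
  then show ?thesis
    by (simp add: nonneg_l1_def lpnorm_nonneg)
qed

(* The upper bound is needed even for nonnegativity: the supremum of a set of reals
   that is unbounded above is unspecified. *)
lemma maxconv_bounds:
  fixes a b :: "'a::ab_group_add \<Rightarrow> real"
  assumes "\<And>t. 0 \<le> a t * b (z - t)" and "\<And>t. a t * b (z - t) \<le> B"
  shows "0 \<le> maxconv a b z" and "maxconv a b z \<le> B"
proof -
  have "a 0 * b (z - 0) \<le> maxconv a b z"
    unfolding maxconv_def by (rule cSUP_upper) (auto intro: bdd_aboveI2 assms(2))
  then show "0 \<le> maxconv a b z"
    using assms(1)[of 0] by linarith
  show "maxconv a b z \<le> B"
    unfolding maxconv_def by (rule cSUP_least) (auto intro: assms(2))
qed

lemma maxconv_maxconv_bounds: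
  fixes a b c d :: "'a::ab_group_add \<Rightarrow> real"
  assumes a: "\<And>t. 0 \<le> a t" and b: "\<And>t. 0 \<le> b t" and c: "\<And>t. 0 \<le> c t"
    and abc: "\<And>s t u. a s * b t * c u \<le> d (s + t + u)"
  shows "0 \<le> maxconv (maxconv a b) c x" and "maxconv (maxconv a b) c x \<le> d x"
proof -
  have "0 \<le> maxconv a b w * c (x - w) \<and> maxconv a b w * c (x - w) \<le> d x" for w
  proof (cases "c (x - w) = 0")
    case True
    have "0 \<le> a 0 * b 0 * c x"
      using a b c by simp
    also have "\<dots> \<le> d x"
      using abc[of 0 0 x] by simp
    finally show ?thesis
      using True by simp
  next
    case False
    then have cpos: "0 < c (x - w)"
      using c[of "x - w"] by linarith
    have "a t * b (w - t) \<le> d x / c (x - w)" for t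
      using abc[of t "w - t" "x - w"] cpos by (simp add: pos_le_divide_eq)
    then have "0 \<le> maxconv a b w" "maxconv a b w \<le> d x / c (x - w)"
      using maxconv_bounds[of a b w] a b by auto
    then show ?thesis
      using cpos by (simp add: pos_le_divide_eq)
  qed
  then show "0 \<le> maxconv (maxconv a b) c x" "maxconv (maxconv a b) c x \<le> d x"
    using maxconv_bounds[of "maxconv a b" c x "d x"] by auto
qed

lemma maxconv_nonneg_l1:
  fixes a b :: "'a::ab_group_add \<Rightarrow> real"
  assumes a: "nonneg_l1 a" and b: "nonneg_l1 b"
  shows "nonneg_l1 (maxconv a b)"
proof -
  \<comment> \<open>dominated by the ordinary convolution, whose sum is the product of the sums\<close>
  let ?conv = "\<lambda>z. \<Sum>\<^sub>\<infinity>t. a t * b (z - t)"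
  have ab: "0 \<le> a t * b (z - t)" for z t
    using a b by (simp add: nonneg_l1_def)
  have rows: "(\<lambda>t. a t * b (z - t)) summable_on UNIV" for z
    using summable_on_SigmaD1[OF convolution_kernel_summable_on[OF a b]] by simp
  have "0 \<le> maxconv a b z \<and> maxconv a b z \<le> ?conv z" for z
  proof -
    have "a t * b (z - t) \<le> ?conv z" for t
      using finite_sum_le_infsum[OF rows, of "{t}"] ab by simp
    then show ?thesis
      using maxconv_bounds[of a b z "?conv z"] ab by simp
  qed
  moreover have "?conv summable_on UNIV"
    using summable_on_Sigma_banach[of "\<lambda>z t. a t * b (z - t)" UNIV "\<lambda>_. UNIV"]
      convolution_kernel_summable_on[OF a b] by simp
  ultimately show ?thesis
    unfolding nonneg_l1_def by (auto intro: summable_on_comparison_test)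
qed

lemma mult_le_maxconv:
  fixes a b :: "'a::ab_group_add \<Rightarrow> real"
  assumes a: "nonneg_l1 a" and b: "nonneg_l1 b"
  shows "a s * b t \<le> maxconv a b (s + t)"
proof -
  have "a r * b (s + t - r) \<le> infsum a UNIV * infsum b UNIV" for r
    using a b by (intro mult_mono nonneg_l1_le_infsum) (auto simp: nonneg_l1_def infsum_nonneg)
  then have "a s * b (s + t - s) \<le> maxconv a b (s + t)"
    unfolding maxconv_def by (intro cSUP_upper bdd_aboveI2) auto
  then show ?thesis
    by simp
qed

lemma mult_le_maxconv_maxconv:
  fixes a b c :: "'a::ab_group_add \<Rightarrow> real"
  assumes a: "nonneg_l1 a" and b: "nonneg_l1 b" and c: "nonneg_l1 c"
  shows "a s * b t * c u \<le> maxconv (maxconv a b) c (s + t + u)"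
proof -
  have "a s * b t * c u \<le> maxconv a b (s + t) * c u"
    using mult_le_maxconv[OF a b] c by (intro mult_right_mono) (auto simp: nonneg_l1_def)
  also have "\<dots> \<le> maxconv (maxconv a b) c (s + t + u)"
    by (rule mult_le_maxconv[OF maxconv_nonneg_l1[OF a b] c])
  finally show ?thesis .
qed

lemma gamma_p_le:
  assumes "nonneg_l1 g" and "nonneg_l1 h" and "g \<noteq> (\<lambda>_. 0)" and "h \<noteq> (\<lambda>_. 0)"
  shows "gamma_p p f \<le> lnorm1 (maxconv (maxconv f g) h) / (lpnorm p g * lpnorm (conj_exp p) h)"
  unfolding gamma_p_def
  by (rule cInf_lower)
    (use assms in \<open>auto intro!: bdd_belowI[where m = 0] divide_nonneg_nonneg mult_nonneg_nonneg
      lnorm1_nonneg lpnorm_nonneg\<close>)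

lemma gamma_p_greatest:
  fixes f :: "'a::ab_group_add \<Rightarrow> real"
  assumes "\<And>g h. nonneg_l1 g \<Longrightarrow> nonneg_l1 h \<Longrightarrow> g \<noteq> (\<lambda>_. 0) \<Longrightarrow> h \<noteq> (\<lambda>_. 0) \<Longrightarrow>
      c \<le> lnorm1 (maxconv (maxconv f g) h) / (lpnorm p g * lpnorm (conj_exp p) h)"
  shows "c \<le> gamma_p p f"
proof -
  define \<delta> :: "'a \<Rightarrow> real" where "\<delta> = (\<lambda>z. if z = 0 then 1 else 0)"
  have "nonneg_l1 \<delta>"
    unfolding nonneg_l1_def \<delta>_def
    by (auto intro!: finite_nonzero_values_imp_summable_on finite_subset[of _ "{0}"] split: if_splits)
  moreover have "\<delta> \<noteq> (\<lambda>_. 0)"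
    unfolding \<delta>_def by (metis one_neq_zero)
  ultimately show ?thesis
    unfolding gamma_p_def by (rule_tac cInf_greatest) (use assms in blast)+
qed

lemma gamma_p_nonneg: "0 \<le> gamma_p p f"
  by (rule gamma_p_greatest)
    (auto intro!: divide_nonneg_nonneg mult_nonneg_nonneg lnorm1_nonneg lpnorm_nonneg)

lemma gamma_p_mult_le:
  assumes g: "nonneg_l1 g" and h: "nonneg_l1 h"
  shows "gamma_p p f * (lpnorm p g * lpnorm (conj_exp p) h) \<le> lnorm1 (maxconv (maxconv f g) h)"
proof (cases "lpnorm p g * lpnorm (conj_exp p) h = 0")
  case True
  then show ?thesis
    by (metis lnorm1_nonneg mult_zero_right)
next
  case False
  then have "g \<noteq> (\<lambda>_. 0)" "h \<noteq> (\<lambda>_. 0)" and pos: "0 < lpnorm p g * lpnorm (conj_exp p) h"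
    using lpnorm_nonneg[of p g] lpnorm_nonneg[of "conj_exp p" h] by auto
  then show ?thesis
    using gamma_p_le[OF g h, of p f] pos_le_divide_eq[OF pos] by simp
qed

lemma gamma_p_section_mult_le:
  fixes f g h :: "'a::ab_group_add \<times> 'b::ab_group_add \<Rightarrow> real"
  assumes f: "nonneg_l1 f" and g: "nonneg_l1 g" and h: "nonneg_l1 h"
  shows "gamma_p p (\<lambda>y. f (s, y)) * lpnorm p (\<lambda>y. g (t, y)) * lpnorm (conj_exp p) (\<lambda>y. h (u, y))
    \<le> lnorm1 (\<lambda>y. maxconv (maxconv f g) h (s + t + u, y))"
proof -
  let ?K = "maxconv (maxconv (\<lambda>y. f (s, y)) (\<lambda>y. g (t, y))) (\<lambda>y. h (u, y))"
  have "0 \<le> ?K y \<and> ?K y \<le> maxconv (maxconv f g) h (s + t + u, y)" for y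
    using maxconv_maxconv_bounds[of "\<lambda>y. f (s, y)" "\<lambda>y. g (t, y)" "\<lambda>y. h (u, y)"
        "\<lambda>y. maxconv (maxconv f g) h (s + t + u, y)" y]
      mult_le_maxconv_maxconv[OF f g h, of "(s, _)" "(t, _)" "(u, _)"] f g h
    by (simp add: nonneg_l1_def)
  then have "lnorm1 ?K \<le> lnorm1 (\<lambda>y. maxconv (maxconv f g) h (s + t + u, y))"
    using nonneg_l1_section[OF maxconv_nonneg_l1[OF maxconv_nonneg_l1[OF f g] h]]
    by (intro lnorm1_mono) (auto simp: nonneg_l1_def)
  moreover have "gamma_p p (\<lambda>y. f (s, y)) * (lpnorm p (\<lambda>y. g (t, y)) * lpnorm (conj_exp p) (\<lambda>y. h (u, y)))
      \<le> lnorm1 ?K"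
    by (intro gamma_p_mult_le nonneg_l1_section g h)
  ultimately show ?thesis
    by (simp add: mult.assoc)
qed

lemma lnorm1_maxconv_section_norms_le:
  fixes f g h :: "'a::ab_group_add \<times> 'b::ab_group_add \<Rightarrow> real" and p :: real
  assumes f: "nonneg_l1 f" and g: "nonneg_l1 g" and h: "nonneg_l1 h"
  defines "\<Gamma> \<equiv> \<lambda>x. gamma_p p (\<lambda>y. f (x, y))"
    and "G \<equiv> \<lambda>x. lpnorm p (\<lambda>y. g (x, y))"
    and "H \<equiv> \<lambda>x. lpnorm (conj_exp p) (\<lambda>y. h (x, y))"
  shows "lnorm1 (maxconv (maxconv \<Gamma> G) H) \<le> lnorm1 (maxconv (maxconv f g) h)"
proof -
  define F where "F = maxconv (maxconv f g) h"
  have F: "nonneg_l1 F"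
    unfolding F_def by (intro maxconv_nonneg_l1 f g h)
  have "\<Gamma> s * G t * H u \<le> lnorm1 (\<lambda>y. F (s + t + u, y))" for s t u
    unfolding \<Gamma>_def G_def H_def F_def by (rule gamma_p_section_mult_le[OF f g h])
  then have "\<bar>maxconv (maxconv \<Gamma> G) H x\<bar> \<le> lnorm1 (\<lambda>y. F (x, y))" for x
    using maxconv_maxconv_bounds[of \<Gamma> G H "\<lambda>x. lnorm1 (\<lambda>y. F (x, y))" x]
    by (simp add: \<Gamma>_def G_def H_def gamma_p_nonneg lpnorm_nonneg)
  then have "lnorm1 (maxconv (maxconv \<Gamma> G) H) \<le> lnorm1 (\<lambda>x. lnorm1 (\<lambda>y. F (x, y)))"
    by (intro lnorm1_mono lnorm1_sections(1) nonneg_l1_abs_summable_on F)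
  also have "\<dots> = lnorm1 F"
    by (intro lnorm1_sections(2) nonneg_l1_abs_summable_on F)
  finally show ?thesis
    unfolding F_def .
qed

theorem mainTheorem13:
  fixes f :: "('a::ab_group_add \<times> 'b::ab_group_add) \<Rightarrow> real" and p :: real
  assumes "1 < p" and "nonneg_l1 f"
  shows "gamma_p p f \<ge> gamma_p p (\<lambda>x. gamma_p p (\<lambda>y. f (x, y)))"
proof (rule gamma_p_greatest)
  fix g h :: "'a \<times> 'b \<Rightarrow> real"
  assume g: "nonneg_l1 g" and h: "nonneg_l1 h" and "g \<noteq> (\<lambda>_. 0)" and "h \<noteq> (\<lambda>_. 0)"
  define q where "q = conj_exp p"
  define \<Gamma> where "\<Gamma> = (\<lambda>x. gamma_p p (\<lambda>y. f (x, y)))"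
  define G where "G = (\<lambda>x. lpnorm p (\<lambda>y. g (x, y)))"
  define H where "H = (\<lambda>x. lpnorm q (\<lambda>y. h (x, y)))"
  have "1 \<le> p" "1 \<le> q"
    using assms(1) by (auto simp: q_def conj_exp_def field_simps)
  then have G: "nonneg_l1 G" "lpnorm p G = lpnorm p g" and H: "nonneg_l1 H" "lpnorm q H = lpnorm q h"
    unfolding G_def H_def
    using g h by (auto intro: nonneg_l1_lpnorm_sections lpnorm_sections nonneg_l1_powr_summable_on)
  have "0 < lpnorm p g" "0 < lpnorm q h"
    using g h \<open>g \<noteq> (\<lambda>_. 0)\<close> \<open>h \<noteq> (\<lambda>_. 0)\<close> \<open>1 \<le> p\<close> \<open>1 \<le> q\<close>
    by (auto intro: lpnorm_pos nonneg_l1_powr_summable_on)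
  then have "G \<noteq> (\<lambda>_. 0)" "H \<noteq> (\<lambda>_. 0)"
    using G(2) H(2) by auto
  then have "gamma_p p \<Gamma> \<le> lnorm1 (maxconv (maxconv \<Gamma> G) H) / (lpnorm p G * lpnorm q H)"
    unfolding q_def using G(1) H(1) by (intro gamma_p_le)
  also have "\<dots> \<le> lnorm1 (maxconv (maxconv f g) h) / (lpnorm p g * lpnorm q h)"
    unfolding G(2) H(2) unfolding \<Gamma>_def G_def H_def q_def
    by (intro divide_right_mono lnorm1_maxconv_section_norms_le assms(2) g h mult_nonneg_nonneg lpnorm_nonneg)
  finally show "gamma_p p \<Gamma> \<le> lnorm1 (maxconv (maxconv f g) h) / (lpnorm p g * lpnorm (conj_exp p) h)"
    unfolding q_def .
qed

end
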